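(* Consider the following group-based qualification system (the 2018 FIFA World Cup qualification format, European zone). There are $k=9$ groups of $6$ teams each; within each group every pair of teams plays a home and an away match. A win gives $3$ points, a draw $1$, a loss $0$. In each group teams are ranked by: (1) points, (2) goal difference (goals scored minus goals conceded) over all group matches, (3) goals scored over all group matches, then by any further fixed tie-breaking rules producing a strict order. Group winners are directly qualified ($\mathcal{R}=2$); teams ranked third to sixth are eliminated ($\mathcal{R}=0$). The nine runners-up form the repechage group; each runner-up is evaluated only on its $8$ matches against the teams ranked first to fifth in its group (the two matches against the sixth-placed team are discarded), and the runners-up are ranked by (1) points, (2) goal difference, (3) goals scored, computed over these $8$ matches, then by further fixed tie-breaking rules. The eight best runners-up advance to the play-offs ($\mathcal{R}=1$) and the worst runner-up is eliminated ($\mathcal{R}=0$). Then this system is not strategy-proof: there exist a team $x$ in some group and two sets of group results $V,\bar V$ that coincide except that in one match of $x$ the opponent scores more goals against $x$ under $\bar V$ than under $V$, such that $\mathcal{R}(V,x)=0$ and $\mathcal{R}(\bar V,x)=1$.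
   Context: $\mathcal{R}(V,x)\in\{0,1,2\}$ denotes the outcome for team $x$ under the full set of match results $V$ of all nine groups: $2$ = directly qualified, $1$ = advanced to the play-offs, $0$ = eliminated. A set of group results records, for every ordered pair $(x,y)$ of distinct teams of the same group, the numbers of goals scored by the home team $x$ and the away team $y$ in their match at $x$'s home. *)

theory Defs
  imports Main
begin

text \<open>A team is a pair (group index, position in group); 9 groups of 6 teams.\<close>
type_synonym team = "nat \<times> nat"

text \<open>Results: V x y = (goals of home team x, goals of away team y) in the match at x's home.\<close>
type_synonym results = "team \<Rightarrow> team \<Rightarrow> nat \<times> nat"

definition teams :: "team set" where
  "teams = {(g, i). g < 9 \<and> i < 6}"

definition opp :: "team \<Rightarrow> team set" where
  "opp x = {y \<in> teams. fst y = fst x \<and> y \<noteq> x}"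

definition match_pts :: "nat \<Rightarrow> nat \<Rightarrow> nat" where
  "match_pts a b = (if a > b then 3 else if a = b then 1 else 0)"

definition pts :: "results \<Rightarrow> team set \<Rightarrow> team \<Rightarrow> nat" where
  "pts V S x = (\<Sum>y\<in>S. match_pts (fst (V x y)) (snd (V x y)) + match_pts (snd (V y x)) (fst (V y x)))"

definition gs :: "results \<Rightarrow> team set \<Rightarrow> team \<Rightarrow> nat" where
  "gs V S x = (\<Sum>y\<in>S. fst (V x y) + snd (V y x))"

definition gc :: "results \<Rightarrow> team set \<Rightarrow> team \<Rightarrow> nat" where
  "gc V S x = (\<Sum>y\<in>S. snd (V x y) + fst (V y x))"

definition gd :: "results \<Rightarrow> team set \<Rightarrow> team \<Rightarrow> int" where
  "gd V S x = int (gs V S x) - int (gc V S x)"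

definition ranks_above ::
  "results \<Rightarrow> (team \<Rightarrow> team \<Rightarrow> bool) \<Rightarrow> team set \<Rightarrow> team \<Rightarrow> team set \<Rightarrow> team \<Rightarrow> bool" where
  "ranks_above V tb Sx x Sy y =
     (pts V Sx x > pts V Sy y \<or>
      (pts V Sx x = pts V Sy y \<and>
       (gd V Sx x > gd V Sy y \<or>
        (gd V Sx x = gd V Sy y \<and>
         (gs V Sx x > gs V Sy y \<or>
          (gs V Sx x = gs V Sy y \<and> tb x y))))))"

definition strict_total_on :: "'a set \<Rightarrow> ('a \<Rightarrow> 'a \<Rightarrow> bool) \<Rightarrow> bool" where
  "strict_total_on A r \<longleftrightarrow>
     (\<forall>a\<in>A. \<not> r a a) \<and>
     (\<forall>a\<in>A. \<forall>b\<in>A. \<forall>c\<in>A. r a b \<and> r b c \<longrightarrow> r a c) \<and>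
     (\<forall>a\<in>A. \<forall>b\<in>A. a \<noteq> b \<longrightarrow> r a b \<or> r b a)"

text \<open>Position (1..6) of x in its group.\<close>
definition grank :: "(results \<Rightarrow> team \<Rightarrow> team \<Rightarrow> bool) \<Rightarrow> results \<Rightarrow> team \<Rightarrow> nat" where
  "grank tb V x = card {y \<in> opp x. ranks_above V (tb V) (opp y) y (opp x) x} + 1"

definition ru_opp :: "(results \<Rightarrow> team \<Rightarrow> team \<Rightarrow> bool) \<Rightarrow> results \<Rightarrow> team \<Rightarrow> team set" where
  "ru_opp tb V x = {y \<in> opp x. grank tb V y \<noteq> 6}"

definition runners_up :: "(results \<Rightarrow> team \<Rightarrow> team \<Rightarrow> bool) \<Rightarrow> results \<Rightarrow> team set" where
  "runners_up tb V = {x \<in> teams. grank tb V x = 2}"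

definition rrank ::
  "(results \<Rightarrow> team \<Rightarrow> team \<Rightarrow> bool) \<Rightarrow> (results \<Rightarrow> team \<Rightarrow> team \<Rightarrow> bool) \<Rightarrow> results \<Rightarrow> team \<Rightarrow> nat" where
  "rrank tb tb2 V x =
     card {y \<in> runners_up tb V. y \<noteq> x \<and>
             ranks_above V (tb2 V) (ru_opp tb V y) y (ru_opp tb V x) x} + 1"

text \<open>Outcome: 2 = directly qualified, 1 = play-offs, 0 = eliminated.\<close>
definition outcome ::
  "(results \<Rightarrow> team \<Rightarrow> team \<Rightarrow> bool) \<Rightarrow> (results \<Rightarrow> team \<Rightarrow> team \<Rightarrow> bool) \<Rightarrow> results \<Rightarrow> team \<Rightarrow> nat" where
  "outcome tb tb2 V x =
     (if grank tb V x = 1 then 2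
      else if grank tb V x = 2 \<and> rrank tb tb2 V x \<le> 8 then 1
      else 0)"

definition opponent_scores_more :: "results \<Rightarrow> results \<Rightarrow> team \<Rightarrow> team \<Rightarrow> bool" where
  "opponent_scores_more V V' x y \<longleftrightarrow>
     ((\<forall>a b. (a, b) \<noteq> (x, y) \<longrightarrow> V' a b = V a b) \<and>
        fst (V' x y) = fst (V x y) \<and> snd (V' x y) > snd (V x y)) \<or>
     ((\<forall>a b. (a, b) \<noteq> (y, x) \<longrightarrow> V' a b = V a b) \<and>
        snd (V' y x) = snd (V y x) \<and> fst (V' y x) > fst (V y x))"

end

theory Submission
  imports Defs
begin

text \<open>
  In group 0 the runner-up x = (0,1) wins both matches against (0,4), 1--0 at home, and draws
  both matches against (0,5) 0--0. At first (0,4) finishes sixth, so the two wins are discarded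
  and x's repechage record is 14 points and 4--2 goals, worse on goal difference than the
  14 points and 5--2 goals of every other runner-up. Conceding a goal at home turns the win
  over (0,4) into a 1--1 draw, which lifts (0,4) to fifth place: level with (0,5) on points and
  goal difference, ahead on goals scored. Now the two draws against (0,5) are discarded
  instead, x's repechage record rises to 16 points, and x, still second in its group, becomes
  the best runner-up. No tie is ever decided by tb or tb2.
\<close>

definition rivals :: "nat \<Rightarrow> nat \<Rightarrow> team list" where
  "rivals g i = map (Pair g) (filter (\<lambda>j. j \<noteq> i) [0..<6])"

lemma opp_eq_rivals: "g < 9 \<Longrightarrow> opp (g, i) = set (rivals g i)"
  by (auto simp: opp_def teams_def rivals_def)

lemma distinct_rivals: "distinct (rivals g i)"
  by (simp add: rivals_def distinct_map inj_on_def)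

lemma sum_opp_eq_sum_list: "g < 9 \<Longrightarrow> sum f (opp (g, i)) = sum_list (map f (rivals g i))"
  by (simp add: opp_eq_rivals sum.distinct_set_conv_list[OF distinct_rivals])

lemma card_filter_opp:
  "g < 9 \<Longrightarrow> card {y \<in> opp (g, i). P y} = length (filter P (rivals g i))"
  by (simp add: opp_eq_rivals distinct_length_filter[OF distinct_rivals] Int_commute
      Collect_conj_eq)

lemma grank_eq_length_filter:
  "g < 9 \<Longrightarrow> grank tb V (g, i) =
     length (filter (\<lambda>y. ranks_above V (tb V) (opp y) y (opp (g, i)) (g, i)) (rivals g i)) + 1"
  by (simp add: grank_def card_filter_opp)

lemma ru_opp_eq_filter_rivals:
  "g < 9 \<Longrightarrow> ru_opp tb V (g, i) = set (filter (\<lambda>y. grank tb V y \<noteq> 6) (rivals g i))"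
  by (auto simp: ru_opp_def opp_eq_rivals)

lemma rivals_unfolded:
  "rivals g i = map (Pair g) (filter (\<lambda>j. j \<noteq> i) [0, 1, 2, 3, 4, 5])"
  by (simp add: rivals_def upt_rec)

lemma less_6_cases:
  assumes "(i::nat) < 6"
  obtains "i = 0" | "i = 1" | "i = 2" | "i = 3" | "i = 4" | "i = 5"
  using assms by linarith

lemma finite_runners_up: "finite (runners_up tb V)"
  by (rule finite_subset[of _ teams]) (auto simp: runners_up_def teams_def)

lemma rrank_eq_1_if_none_above:
  assumes "\<And>y. y \<in> runners_up tb V \<Longrightarrow> y \<noteq> x \<Longrightarrow>
             \<not> ranks_above V (tb2 V) (ru_opp tb V y) y (ru_opp tb V x) x"
  shows "rrank tb tb2 V x = 1"
proof -
  have none_above: "{y \<in> runners_up tb V. y \<noteq> x \<and>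
          ranks_above V (tb2 V) (ru_opp tb V y) y (ru_opp tb V x) x} = {}"
    using assms by blast
  show ?thesis unfolding rrank_def none_above by simp
qed

lemma rrank_eq_card_if_all_above:
  assumes "x \<in> runners_up tb V"
    and "\<And>y. y \<in> runners_up tb V \<Longrightarrow> y \<noteq> x \<Longrightarrow>
           ranks_above V (tb2 V) (ru_opp tb V y) y (ru_opp tb V x) x"
  shows "rrank tb tb2 V x = card (runners_up tb V)"
proof -
  have others_above: "{y \<in> runners_up tb V. y \<noteq> x \<and>
          ranks_above V (tb2 V) (ru_opp tb V y) y (ru_opp tb V x) x} = runners_up tb V - {x}"
    using assms(2) by blast
  have "card (runners_up tb V) > 0"
    using assms(1) finite_runners_up by (auto simp: card_gt_0_iff)
  then show ?thesis
    unfolding rrank_def others_above using assms(1) finite_runners_up by simp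
qed

lemma runners_up_eq_seconds:
  assumes "\<And>g i. g < 9 \<Longrightarrow> i < 6 \<Longrightarrow> grank tb V (g, i) = 2 \<longleftrightarrow> i = 1"
  shows "runners_up tb V = (\<lambda>g. (g, 1)) ` {..<9}"
proof (rule set_eqI)
  fix x :: team
  obtain g i where "x = (g, i)" by fastforce
  then show "x \<in> runners_up tb V \<longleftrightarrow> x \<in> (\<lambda>g. (g, 1)) ` {..<9}"
    using assms[of g i] by (auto simp: runners_up_def teams_def)
qed

lemma card_image_pair_const: "card ((\<lambda>a. (a, c)) ` A) = card A"
  by (simp add: card_image inj_on_def)

text \<open>Table entry (i, j) is the score of team i at home against team j. Apart from the
  listed exceptions the team with the smaller index wins 1--0.\<close>

definition standard_table :: "nat \<Rightarrow> nat \<Rightarrow> nat \<times> nat" where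
  "standard_table i j =
     (if (i, j) = (1, 4) \<or> (i, j) = (4, 1) then (0, 0)
      else if (i, j) = (1, 2) then (2, 0)
      else if i < j then (1, 0) else (0, 1))"

definition table_before :: "nat \<Rightarrow> nat \<Rightarrow> nat \<times> nat" where
  "table_before i j =
     (if (i, j) \<in> {(1, 5), (5, 1), (3, 4), (4, 5), (5, 4)} then (0, 0)
      else if (i, j) = (3, 2) then (1, 0)
      else if i < j then (1, 0) else (0, 1))"

definition table_after :: "nat \<Rightarrow> nat \<Rightarrow> nat \<times> nat" where
  "table_after i j = (if (i, j) = (1, 4) then (1, 1) else table_before i j)"

text \<open>Group 0 plays according to the table A, every other group according to the standard
  table; matches between different groups never enter any statistic.\<close>

definition results_of :: "(nat \<Rightarrow> nat \<Rightarrow> nat \<times> nat) \<Rightarrow> results" where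
  "results_of A = (\<lambda>(g, i) (h, j). if g = 0 \<and> h = 0 then A i j else standard_table i j)"

lemmas score_simps = pts_def gs_def gc_def match_pts_def results_of_def standard_table_def
  table_before_def table_after_def

lemma statistics_other_group:
  assumes "g \<noteq> 0" "g < 9" "i < 6"
  shows "pts (results_of A) (opp (g, i)) (g, i) = [30, 20, 18, 12, 8, 0] ! i \<and>
         gs (results_of A) (opp (g, i)) (g, i) = [10, 7, 6, 4, 2, 0] ! i \<and>
         gc (results_of A) (opp (g, i)) (g, i) = [0, 2, 5, 6, 6, 10] ! i"
  using assms(3) by (cases rule: less_6_cases)
    (simp_all add: assms score_simps sum_opp_eq_sum_list rivals_unfolded)

lemma statistics_group0_before:
  assumes "i < 6"
  shows "pts (results_of table_before) (opp (0, i)) (0, i) = [30, 20, 15, 13, 3, 4] ! i \<and>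
         gs (results_of table_before) (opp (0, i)) (0, i) = [10, 6, 5, 4, 0, 0] ! i \<and>
         gc (results_of table_before) (opp (0, i)) (0, i) = [0, 2, 5, 5, 7, 6] ! i"
  using assms by (cases rule: less_6_cases)
    (simp_all add: score_simps sum_opp_eq_sum_list rivals_unfolded)

lemma statistics_group0_after:
  assumes "i < 6"
  shows "pts (results_of table_after) (opp (0, i)) (0, i) = [30, 18, 15, 13, 4, 4] ! i \<and>
         gs (results_of table_after) (opp (0, i)) (0, i) = [10, 6, 5, 4, 1, 0] ! i \<and>
         gc (results_of table_after) (opp (0, i)) (0, i) = [0, 3, 5, 5, 7, 6] ! i"
  using assms by (cases rule: less_6_cases)
    (simp_all add: score_simps sum_opp_eq_sum_list rivals_unfolded)

lemmas grank_simps = grank_eq_length_filter rivals_unfolded ranks_above_def gd_def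

lemma grank_other_group:
  "g \<noteq> 0 \<Longrightarrow> g < 9 \<Longrightarrow> i < 6 \<Longrightarrow> grank tb (results_of A) (g, i) = i + 1"
  by (cases i rule: less_6_cases) (simp_all add: grank_simps statistics_other_group)

lemma grank_group0_before:
  "i < 6 \<Longrightarrow> grank tb (results_of table_before) (0, i) = [1, 2, 3, 4, 6, 5] ! i"
  by (cases i rule: less_6_cases) (simp_all add: grank_simps statistics_group0_before)

lemma grank_group0_after:
  "i < 6 \<Longrightarrow> grank tb (results_of table_after) (0, i) = i + 1"
  by (cases i rule: less_6_cases) (simp_all add: grank_simps statistics_group0_after)

lemma second_of_group0_before:
  "i < 6 \<Longrightarrow> grank tb (results_of table_before) (0, i) = 2 \<longleftrightarrow> i = 1"
  by (cases i rule: less_6_cases) (simp_all add: grank_group0_before)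

lemma runners_up_results_of:
  assumes "A = table_before \<or> A = table_after"
  shows "runners_up tb (results_of A) = (\<lambda>g. (g, 1)) ` {..<9}"
proof (rule runners_up_eq_seconds)
  fix g i :: nat
  assume "g < 9" "i < 6"
  then show "grank tb (results_of A) (g, i) = 2 \<longleftrightarrow> i = 1"
    using assms second_of_group0_before grank_group0_after grank_other_group
    by (cases "g = 0") auto
qed

lemmas ru_opp_simps = ru_opp_eq_filter_rivals rivals_unfolded

lemma ru_opp_other_group:
  "g \<noteq> 0 \<Longrightarrow> g < 9 \<Longrightarrow> ru_opp tb (results_of A) (g, 1) = {(g, 0), (g, 2), (g, 3), (g, 4)}"
  by (simp add: ru_opp_simps grank_other_group)

lemma ru_opp_group0_before:
  "ru_opp tb (results_of table_before) (0, 1) = {(0, 0), (0, 2), (0, 3), (0, 5)}"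
  by (simp add: ru_opp_simps grank_group0_before)

lemma ru_opp_group0_after:
  "ru_opp tb (results_of table_after) (0, 1) = {(0, 0), (0, 2), (0, 3), (0, 4)}"
  by (simp add: ru_opp_simps grank_group0_after)

lemma repechage_statistics_other_group:
  assumes "g \<noteq> 0" "g < 9"
  shows "pts (results_of A) (ru_opp tb (results_of A) (g, 1)) (g, 1) = 14 \<and>
         gs (results_of A) (ru_opp tb (results_of A) (g, 1)) (g, 1) = 5 \<and>
         gc (results_of A) (ru_opp tb (results_of A) (g, 1)) (g, 1) = 2"
  unfolding ru_opp_other_group[OF assms] using assms by (simp add: score_simps)

lemma repechage_statistics_group0_before:
  "pts (results_of table_before) (ru_opp tb (results_of table_before) (0, 1)) (0, 1) = 14 \<and>
   gs (results_of table_before) (ru_opp tb (results_of table_before) (0, 1)) (0, 1) = 4 \<and>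
   gc (results_of table_before) (ru_opp tb (results_of table_before) (0, 1)) (0, 1) = 2"
  unfolding ru_opp_group0_before by (simp add: score_simps)

lemma repechage_statistics_group0_after:
  "pts (results_of table_after) (ru_opp tb (results_of table_after) (0, 1)) (0, 1) = 16 \<and>
   gs (results_of table_after) (ru_opp tb (results_of table_after) (0, 1)) (0, 1) = 6 \<and>
   gc (results_of table_after) (ru_opp tb (results_of table_after) (0, 1)) (0, 1) = 3"
  unfolding ru_opp_group0_after by (simp add: score_simps)

lemma other_runner_up_above_before:
  assumes "g \<noteq> 0" "g < 9"
  shows "ranks_above (results_of table_before) (tb2 (results_of table_before))
           (ru_opp tb (results_of table_before) (g, 1)) (g, 1)
           (ru_opp tb (results_of table_before) (0, 1)) (0, 1)"
  by (simp add: ranks_above_def gd_def repechage_statistics_other_group[OF assms]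
      repechage_statistics_group0_before del: One_nat_def)

lemma other_runner_up_not_above_after:
  assumes "g \<noteq> 0" "g < 9"
  shows "\<not> ranks_above (results_of table_after) (tb2 (results_of table_after))
           (ru_opp tb (results_of table_after) (g, 1)) (g, 1)
           (ru_opp tb (results_of table_after) (0, 1)) (0, 1)"
  by (simp add: ranks_above_def gd_def repechage_statistics_other_group[OF assms]
      repechage_statistics_group0_after del: One_nat_def)

lemma other_runner_up:
  assumes "y \<in> runners_up tb (results_of A)" "y \<noteq> (0, 1)"
    and "A = table_before \<or> A = table_after"
  obtains g where "y = (g, 1)" "g \<noteq> 0" "g < 9"
  using assms by (auto simp: runners_up_results_of)

lemma rrank_group0_before: "rrank tb tb2 (results_of table_before) (0, 1) = 9"
proof -
  have "rrank tb tb2 (results_of table_before) (0, 1) =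
          card (runners_up tb (results_of table_before))"
  proof (rule rrank_eq_card_if_all_above)
    show "(0, 1) \<in> runners_up tb (results_of table_before)"
      by (simp add: runners_up_results_of)
    fix y
    assume "y \<in> runners_up tb (results_of table_before)" "y \<noteq> (0, 1)"
    then obtain g where "y = (g, 1)" "g \<noteq> 0" "g < 9"
      by (rule other_runner_up) simp
    then show "ranks_above (results_of table_before) (tb2 (results_of table_before))
        (ru_opp tb (results_of table_before) y) y
        (ru_opp tb (results_of table_before) (0, 1)) (0, 1)"
      using other_runner_up_above_before by simp
  qed
  then show ?thesis by (simp add: runners_up_results_of card_image_pair_const)
qed

lemma rrank_group0_after: "rrank tb tb2 (results_of table_after) (0, 1) = 1"
proof (rule rrank_eq_1_if_none_above)
  fix y
  assume "y \<in> runners_up tb (results_of table_after)" "y \<noteq> (0, 1)"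
  then obtain g where "y = (g, 1)" "g \<noteq> 0" "g < 9"
    by (rule other_runner_up) simp
  then show "\<not> ranks_above (results_of table_after) (tb2 (results_of table_after))
      (ru_opp tb (results_of table_after) y) y
      (ru_opp tb (results_of table_after) (0, 1)) (0, 1)"
    using other_runner_up_not_above_after by simp
qed

theorem corollary3p1:
  fixes tb tb2 :: "results \<Rightarrow> team \<Rightarrow> team \<Rightarrow> bool"
  assumes "\<And>V. strict_total_on teams (tb V)"
      and "\<And>V. strict_total_on teams (tb2 V)"
  shows "\<exists>x V V'. x \<in> teams \<and> (\<exists>y \<in> opp x. opponent_scores_more V V' x y) \<and>
           outcome tb tb2 V x = 0 \<and> outcome tb tb2 V' x = 1"
proof (intro exI conjI bexI)
  show "(0, 1) \<in> teams" "(0, 4) \<in> opp (0, 1)"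
    by (simp_all add: opp_def teams_def)
  show "opponent_scores_more (results_of table_before) (results_of table_after) (0, 1) (0, 4)"
    by (auto simp: opponent_scores_more_def results_of_def table_after_def table_before_def)
  show "outcome tb tb2 (results_of table_before) (0, 1) = 0"
    by (simp add: outcome_def grank_group0_before rrank_group0_before del: One_nat_def)
  show "outcome tb tb2 (results_of table_after) (0, 1) = 1"
    by (simp add: outcome_def grank_group0_after rrank_group0_after del: One_nat_def)
qed

end
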